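(* Let $k$ be a fixed positive integer. There exists a constant $n_0(k)$ such that the following holds. If $n\geq n_0(k)$, $t$ is an integer, and $S\subseteq \mathcal{P}(n)$ has cardinality at least \[\sum_{r=0}^{k-1}\binom{n}{\left\lceil \frac{n-k+1 +2r}{2}\right\rceil} + t,\] then \[\mathrm{comp}(S)\geq t\binom{\left\lceil (n+k)/2\right\rceil}{k}.\]
   Context: $\mathcal{P}(n)$ is the boolean lattice: the set of all subsets of $[n]=\{1,\dots,n\}$ ordered by inclusion. For $S\subseteq \mathcal{P}(n)$, $\mathrm{comp}(S)$ is the number of unordered pairs of distinct comparable elements of $S$. *)

theory Defs
  imports Main "HOL-Library.Library"
begin

text \<open>comp S: number of unordered pairs of distinct comparable elements of S,
  counted as ordered pairs (A,B) with A a proper subset of B.\<close>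
definition comp :: "nat set set \<Rightarrow> nat" where
  "comp S = card {(A, B). A \<in> S \<and> B \<in> S \<and> A \<subset> B}"

end

theory Submission
  imports Defs "HOL-Combinatorics.Multiset_Permutations"
begin

text \<open>Double counting over the maximal chains of the cube, i.e.\ over the permutations \<open>\<pi>\<close>
  of the ground set, a set lying on \<open>\<pi>\<close> iff it consists of the first entries of \<open>\<pi>\<close>. Weighting a
  set \<open>A\<close> by \<open>n choose |A|\<close>, every set of \<open>S\<close> has total weight \<open>n!\<close> over all chains. On one chain,
  charge a member \<open>A\<close> to a member \<open>B\<close> on a more central level whenever at least
  \<open>D = \<lceil>(n+k)/2\<rceil> choose k\<close> sets of size \<open>|B|\<close> are comparable with \<open>A\<close>. The uncharged members of a
  chain lie on at most \<open>k\<close> levels or within \<open>2k\<close> of the extreme levels, so their weight is at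
  most that of the \<open>k\<close> middle levels. A charged pair lies on a fraction of at most
  \<open>1 / (D \<cdot> (n choose |A|))\<close> of all chains, so the charged weight over all chains is at most
  \<open>n!/D\<close> per comparable pair of \<open>S\<close>.\<close>

definition mid_dist :: "nat \<Rightarrow> nat \<Rightarrow> nat" where
  "mid_dist n r = nat \<bar>2 * int r - int n\<bar>"

lemma binomial_le_if_mid_dist_le:
  assumes "r \<le> n" "m \<le> n" "mid_dist n m \<le> mid_dist n r"
  shows "n choose r \<le> n choose m"
proof -
  have sym: "n choose j = n choose min j (n - j)" if "j \<le> n" for j
    using that binomial_symmetric[of j n] by (simp add: min_def)
  have "min r (n - r) \<le> min m (n - m)" "2 * min m (n - m) \<le> n"
    using assms by (auto simp: mid_dist_def min_def)
  then show ?thesis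
    using sym assms by (metis binomial_mono)
qed

lemma two_binomial_le_binomial_Suc:
  assumes "3 * j + 2 \<le> n"
  shows "2 * (n choose j) \<le> n choose Suc j"
proof -
  have "Suc j * 2 \<le> n - j"
    using assms by simp
  then have "Suc j * (2 * (n choose j)) \<le> (n - j) * (n choose j)"
    by (metis mult.assoc mult_right_mono zero_le)
  also have "\<dots> = Suc j * (n choose Suc j)"
    by (metis binomial_absorb_comp binomial_absorption)
  finally show ?thesis
    by (simp only: mult_le_cancel1)
qed

lemma sum_binomial_below_le:
  assumes "3 * j \<le> n + 1"
  shows "(\<Sum>r<j. n choose r) \<le> n choose j"
  using assms
proof (induction j)
  case (Suc j)
  have "(\<Sum>r<Suc j. n choose r) \<le> 2 * (n choose j)"
    using Suc by simp
  also have "\<dots> \<le> n choose Suc j"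
    using Suc.prems by (intro two_binomial_le_binomial_Suc) simp
  finally show ?case .
qed simp

text \<open>The \<open>k\<close> levels with the largest binomial coefficients; the lowest one is
  \<open>\<lceil>(n - k + 1) / 2\<rceil>\<close>.\<close>
definition middle_levels :: "nat \<Rightarrow> nat \<Rightarrow> nat set" where
  "middle_levels n k = {(n + 2 - k) div 2 ..< (n + 2 - k) div 2 + k}"

lemma binomial_le_middle_levels:
  assumes "r \<le> n" "r \<notin> middle_levels n k" "m \<in> middle_levels n k"
  shows "n choose r \<le> n choose m"
  using assms by (intro binomial_le_if_mid_dist_le) (auto simp: middle_levels_def mid_dist_def)

lemma sum_binomial_le_middle_levels:
  assumes "finite U" "U \<subseteq> {..n}" "card U \<le> k"
  shows "(\<Sum>r\<in>U. n choose r) \<le> (\<Sum>m\<in>middle_levels n k. n choose m)"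
proof -
  let ?M = "middle_levels n k"
  let ?f = "\<lambda>r. n choose r"
  have "card (U - ?M) \<le> card (?M - U)"
    using assms by (simp add: card_Diff_subset_Int middle_levels_def Int_commute diff_le_mono)
  then obtain g where g: "g ` (U - ?M) \<subseteq> ?M - U" "inj_on g (U - ?M)"
    using card_le_inj[of "U - ?M" "?M - U"] assms(1) by (auto simp: middle_levels_def)
  have "(\<Sum>r\<in>U - ?M. ?f r) \<le> (\<Sum>r\<in>U - ?M. ?f (g r))"
    using g(1) assms(2) by (intro sum_mono binomial_le_middle_levels) auto
  also have "\<dots> = (\<Sum>r\<in>g ` (U - ?M). ?f r)"
    using g(2) by (simp add: sum.reindex)
  also have "\<dots> \<le> (\<Sum>r\<in>?M - U. ?f r)"
    using g(1) by (intro sum_mono2) (auto simp: middle_levels_def)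
  finally have "(\<Sum>r\<in>U - ?M. ?f r) \<le> (\<Sum>r\<in>?M - U. ?f r)" .
  moreover have "(\<Sum>r\<in>U. ?f r) = (\<Sum>r\<in>U \<inter> ?M. ?f r) + (\<Sum>r\<in>U - ?M. ?f r)"
    using assms(1) by (rule sum.Int_Diff)
  moreover have "(\<Sum>r\<in>?M. ?f r) = (\<Sum>r\<in>?M \<inter> U. ?f r) + (\<Sum>r\<in>?M - U. ?f r)"
    by (rule sum.Int_Diff) (simp add: middle_levels_def)
  ultimately show ?thesis
    by (simp add: Int_commute)
qed

lemma sum_binomial_extreme_levels_le_middle_levels:
  assumes "1 \<le> k" "6 * k + 2 \<le> n" "U \<subseteq> {..n}" "\<forall>r\<in>U. r < 2 * k \<or> n < r + 2 * k"
  shows "(\<Sum>r\<in>U. n choose r) \<le> (\<Sum>m\<in>middle_levels n k. n choose m)"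
proof -
  let ?f = "\<lambda>r. n choose r"
  let ?low = "{..<2 * k}"
  have "U \<subseteq> ?low \<union> (\<lambda>r. n - r) ` ?low"
  proof
    fix r assume "r \<in> U"
    then have "r \<le> n" "r < 2 * k \<or> n < r + 2 * k"
      using assms(3,4) by auto
    then show "r \<in> ?low \<union> (\<lambda>r. n - r) ` ?low"
      by (cases "r < 2 * k") (auto intro!: image_eqI[of _ _ "n - r"])
  qed
  then have "(\<Sum>r\<in>U. ?f r) \<le> (\<Sum>r\<in>?low \<union> (\<lambda>r. n - r) ` ?low. ?f r)"
    by (intro sum_mono2) auto
  also have "\<dots> \<le> (\<Sum>r\<in>?low. ?f r) + (\<Sum>r\<in>(\<lambda>r. n - r) ` ?low. ?f r)"
    by (simp add: sum_Un_nat)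
  also have "(\<Sum>r\<in>(\<lambda>r. n - r) ` ?low. ?f r) \<le> (\<Sum>r\<in>?low. ?f (n - r))"
    using sum_image_le[of ?low ?f "\<lambda>r. n - r"] by (simp add: comp_def)
  also have "(\<Sum>r\<in>?low. ?f (n - r)) = (\<Sum>r\<in>?low. ?f r)"
    using assms(2) by (intro sum.cong) (auto simp: binomial_symmetric[symmetric])
  also have "(\<Sum>r\<in>?low. ?f r) + (\<Sum>r\<in>?low. ?f r) \<le> 2 * ?f (2 * k)"
    using sum_binomial_below_le[of "2 * k" n] assms(2) by simp
  also have "\<dots> \<le> ?f (Suc (2 * k))"
    using assms(2) by (intro two_binomial_le_binomial_Suc) simp
  also have "\<dots> \<le> ?f ((n + 2 - k) div 2)"
    using assms(1,2) by (intro binomial_le_if_mid_dist_le) (auto simp: mid_dist_def)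
  also have "\<dots> \<le> (\<Sum>m\<in>middle_levels n k. ?f m)"
    using assms(1) by (intro member_le_sum) (auto simp: middle_levels_def)
  finally show ?thesis
    by simp
qed

text \<open>Levels ordered by distance from the middle, ties broken towards the lower level; the factor
  \<open>n + 1\<close> makes this order lexicographic on the levels \<open>0, \<dots>, n\<close>.\<close>
definition level_rank :: "nat \<Rightarrow> nat \<Rightarrow> nat" where
  "level_rank n r = (n + 1) * mid_dist n r + r"

lemma mid_dist_le_if_level_rank_le:
  assumes "level_rank n a \<le> level_rank n b" "b \<le> n"
  shows "mid_dist n a \<le> mid_dist n b"
proof (rule ccontr)
  assume "\<not> ?thesis"
  then have "(n + 1) * (mid_dist n b + 1) \<le> (n + 1) * mid_dist n a"
    by (intro mult_le_mono2) simp
  then show False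
    using assms by (simp add: level_rank_def algebra_simps)
qed

lemma inj_on_level_rank: "inj_on (level_rank n) {..n}"
proof (rule inj_onI)
  fix a b assume "a \<in> {..n}" "b \<in> {..n}" "level_rank n a = level_rank n b"
  then have "mid_dist n a = mid_dist n b"
    using mid_dist_le_if_level_rank_le by (metis atMost_iff le_antisym order_refl)
  then show "a = b"
    using \<open>level_rank n a = level_rank n b\<close> by (simp add: level_rank_def)
qed

text \<open>The number of \<open>b\<close>-subsets of an \<open>n\<close>-set comparable with a fixed \<open>a\<close>-subset.\<close>
definition comparable_count :: "nat \<Rightarrow> nat \<Rightarrow> nat \<Rightarrow> nat" where
  "comparable_count n a b = (if a < b then (n - a) choose (b - a) else a choose (a - b))"

lemma comparable_count_complement:
  assumes "a \<le> n" "b \<le> n"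
  shows "comparable_count n (n - a) (n - b) = comparable_count n a b"
  using assms by (auto simp: comparable_count_def)

lemma binomial_le_inner_binomial:
  assumes "k \<le> d" "d + k \<le> N" "M \<le> N"
  shows "M choose k \<le> N choose d"
proof -
  have "M choose k \<le> N choose k"
    using assms(3) by (rule binomial_right_mono)
  also have "\<dots> \<le> N choose d"
    using assms(1,2) by (intro binomial_le_if_mid_dist_le) (auto simp: mid_dist_def)
  finally show ?thesis .
qed

lemma near_extremes_if_few_comparable_below_middle:
  assumes "1 \<le> k" "3 * k \<le> n" "finite H" "k \<le> card H"
    and H: "\<And>r. r \<in> H \<Longrightarrow>
      x < r \<and> r + x \<le> n \<and> comparable_count n x r < (n + k + 1) div 2 choose k"
  shows "\<forall>r\<in>insert x H. r < 2 * k \<or> n < r + 2 * k"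
proof -
  have far: "False" if "r \<in> H" "k \<le> r - x" "r + k \<le> n" "n + k \<le> 2 * (n - x)" for r
  proof -
    have "(n + k + 1) div 2 choose k \<le> (n - x) choose (r - x)"
      using that by (intro binomial_le_inner_binomial) auto
    then show False
      using H[OF \<open>r \<in> H\<close>] by (auto simp: comparable_count_def)
  qed
  have "x < k"
  proof (rule ccontr)
    assume "\<not> x < k"
    have "\<not> H \<subseteq> {x<..<x + k}"
      using card_mono[of "{x<..<x + k}" H] assms(1,4) by auto
    then obtain m where "m \<in> H" "x + k \<le> m"
      using H by force
    then show False
      using H[of m] \<open>\<not> x < k\<close> by (intro far[of m]) auto
  qed
  moreover have "r < 2 * k \<or> n < r + 2 * k" if "r \<in> H" for r
  proof (rule ccontr)
    assume "\<not> ?thesis"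
    then show False
      using H[OF that] \<open>x < k\<close> assms(2) by (intro far[OF that]) auto
  qed
  ultimately show ?thesis
    by auto
qed

lemma near_extremes_if_few_comparable:
  assumes "1 \<le> k" "3 * k \<le> n" "x \<le> n" "H \<subseteq> {..n}" "finite H" "k \<le> card H"
    and H: "\<And>r. r \<in> H \<Longrightarrow> level_rank n r < level_rank n x \<and>
      comparable_count n x r < (n + k + 1) div 2 choose k"
  shows "\<forall>r\<in>insert x H. r < 2 * k \<or> n < r + 2 * k"
proof -
  have closer: "mid_dist n r \<le> mid_dist n x" "r \<noteq> x" if "r \<in> H" for r
    using H[OF that] assms(3) mid_dist_le_if_level_rank_le[of n r x] by auto
  show ?thesis
  proof (cases "2 * x \<le> n")
    case True
    have "x < r \<and> r + x \<le> n" if "r \<in> H" for r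
      using closer[OF that] True by (auto simp: mid_dist_def)
    then show ?thesis
      using H assms(1-3,5,6) by (intro near_extremes_if_few_comparable_below_middle) auto
  next
    case False
    let ?H' = "(\<lambda>r. n - r) ` H"
    have inj: "inj_on (\<lambda>r. n - r) H"
      using assms(4) by (intro inj_onI) (metis atMost_iff diff_diff_cancel subsetD)
    have "n - x < r' \<and> r' + (n - x) \<le> n \<and>
      comparable_count n (n - x) r' < (n + k + 1) div 2 choose k" if "r' \<in> ?H'" for r'
    proof -
      obtain r where r: "r \<in> H" "r' = n - r"
        using \<open>r' \<in> ?H'\<close> by auto
      then have "r < x" "n \<le> r + x" "r \<le> n"
        using closer[OF r(1)] False assms(4) by (auto simp: mid_dist_def)
      then show ?thesis
        using H[OF r(1)] comparable_count_complement[of x n r] r(2) assms(3) by auto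
    qed
    then have "\<forall>r\<in>insert (n - x) ?H'. r < 2 * k \<or> n < r + 2 * k"
      using assms(1,2,5,6) inj
      by (intro near_extremes_if_few_comparable_below_middle) (auto simp: card_image)
    then show ?thesis
      using assms(3,4) by fastforce
  qed
qed

definition uncharged_levels :: "nat \<Rightarrow> nat \<Rightarrow> nat set \<Rightarrow> nat set" where
  "uncharged_levels n D R =
    {r \<in> R. \<forall>r'\<in>R. level_rank n r' < level_rank n r \<longrightarrow> comparable_count n r r' < D}"

lemma sum_binomial_uncharged_levels_le_middle_levels:
  assumes "1 \<le> k" "6 * k + 2 \<le> n" "finite R" "R \<subseteq> {..n}"
  shows "(\<Sum>r\<in>uncharged_levels n ((n + k + 1) div 2 choose k) R. n choose r)
    \<le> (\<Sum>m\<in>middle_levels n k. n choose m)"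
proof -
  define U where "U = uncharged_levels n ((n + k + 1) div 2 choose k) R"
  have U: "finite U" "U \<subseteq> R" "U \<subseteq> {..n}"
    using assms(3,4) by (auto simp: U_def uncharged_levels_def)
  show ?thesis
  proof (cases "card U \<le> k")
    case True
    then show ?thesis
      using U by (simp add: U_def sum_binomial_le_middle_levels)
  next
    case False
    then have "U \<noteq> {}"
      by auto
    then obtain x where x: "x \<in> U" "level_rank n x = Max (level_rank n ` U)"
      using U(1) by (metis Max_in finite_imageI image_iff image_is_empty)
    have below: "level_rank n r < level_rank n x" if "r \<in> U - {x}" for r
    proof -
      have "level_rank n r \<le> level_rank n x"
        using that x U(1) by simp
      moreover have "level_rank n r \<noteq> level_rank n x"
        using that x(1) U(3) inj_on_level_rank[of n] by (auto dest: inj_onD)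
      ultimately show ?thesis
        by simp
    qed
    have small: "comparable_count n x r < (n + k + 1) div 2 choose k" if "r \<in> U - {x}" for r
      using below[OF that] that x(1) by (auto simp: U_def uncharged_levels_def)
    have "k \<le> card (U - {x})"
      using False x(1) U(1) by simp
    then have "\<forall>r\<in>insert x (U - {x}). r < 2 * k \<or> n < r + 2 * k"
      using assms(1,2) x(1) U below small
      by (intro near_extremes_if_few_comparable) auto
    then show ?thesis
      using x(1) U(3) assms(1,2)
      by (simp add: U_def insert_absorb sum_binomial_extreme_levels_le_middle_levels)
  qed
qed

definition initial_set :: "'a list \<Rightarrow> 'a set \<Rightarrow> bool" where
  "initial_set \<pi> A \<longleftrightarrow> set (take (card A) \<pi>) = A"

lemma card_permutations_initial_set_filter:
  assumes U: "finite U" and BU: "B \<subseteq> U"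
  shows "card {\<pi> \<in> permutations_of_set U. initial_set \<pi> B \<and> Q (take (card B) \<pi>)}
    = card {xs \<in> permutations_of_set B. Q xs} * fact (card U - card B)"
proof -
  let ?X = "{xs \<in> permutations_of_set B. Q xs}"
  let ?Y = "permutations_of_set (U - B)"
  let ?T = "{\<pi> \<in> permutations_of_set U. initial_set \<pi> B \<and> Q (take (card B) \<pi>)}"
  let ?app = "\<lambda>(xs, ys). xs @ ys"
  have len: "length xs = card B" if "xs \<in> ?X" for xs
    using that by (auto dest: length_finite_permutations_of_set)
  have inj: "inj_on ?app (?X \<times> ?Y)"
  proof (rule inj_onI)
    fix p q assume p: "p \<in> ?X \<times> ?Y" and q: "q \<in> ?X \<times> ?Y" and "?app p = ?app q"
    obtain xs ys xs' ys' where "p = (xs, ys)" "q = (xs', ys')"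
      by (cases p, cases q)
    moreover from this have "length xs = length xs'"
      using p q len by auto
    ultimately show "p = q"
      using \<open>?app p = ?app q\<close> by simp
  qed
  have image: "?app ` (?X \<times> ?Y) = ?T"
  proof
    show "?app ` (?X \<times> ?Y) \<subseteq> ?T"
    proof
      fix \<pi> assume "\<pi> \<in> ?app ` (?X \<times> ?Y)"
      then obtain xs ys where xs: "xs \<in> ?X" and ys: "ys \<in> ?Y" and \<pi>: "\<pi> = xs @ ys"
        by auto
      have "take (card B) \<pi> = xs"
        using len[OF xs] \<pi> by simp
      moreover have "\<pi> \<in> permutations_of_set U"
        using xs ys BU \<pi> by (auto simp: permutations_of_set_def)
      ultimately show "\<pi> \<in> ?T"
        using xs by (simp add: initial_set_def permutations_of_set_def)
    qed
  next
    show "?T \<subseteq> ?app ` (?X \<times> ?Y)"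
    proof
      fix \<pi> assume "\<pi> \<in> ?T"
      then have d: "distinct \<pi>" "set \<pi> = U" and "set (take (card B) \<pi>) = B"
        and "Q (take (card B) \<pi>)"
        by (auto simp: permutations_of_set_def initial_set_def)
      moreover have "set (take (card B) \<pi>) \<inter> set (drop (card B) \<pi>) = {}"
        using d by (intro set_take_disj_set_drop_if_distinct) simp_all
      moreover have "set (take (card B) \<pi>) \<union> set (drop (card B) \<pi>) = U"
        using d by (metis append_take_drop_id set_append)
      ultimately have "(take (card B) \<pi>, drop (card B) \<pi>) \<in> ?X \<times> ?Y"
        by (auto simp: permutations_of_set_def)
      then show "\<pi> \<in> ?app ` (?X \<times> ?Y)"
        by (intro image_eqI[of _ _ "(take (card B) \<pi>, drop (card B) \<pi>)"]) auto
    qed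
  qed
  have "card ?T = card ?X * card ?Y"
    unfolding image[symmetric] using inj by (simp add: card_image card_cartesian_product)
  then show ?thesis
    using U BU finite_subset[OF BU U] by (simp add: card_Diff_subset)
qed

lemma card_permutations_initial_set:
  assumes "finite U" "A \<subseteq> U"
  shows "card {\<pi> \<in> permutations_of_set U. initial_set \<pi> A} = fact (card A) * fact (card U - card A)"
  using card_permutations_initial_set_filter[OF assms, of "\<lambda>_. True"] finite_subset[OF assms(2,1)]
  by simp

lemma card_permutations_initial_sets:
  assumes "finite U" "A \<subseteq> B" "B \<subseteq> U"
  shows "card {\<pi> \<in> permutations_of_set U. initial_set \<pi> A \<and> initial_set \<pi> B}
    = fact (card A) * fact (card B - card A) * fact (card U - card B)"
proof -
  have fin: "finite B"
    using assms(1,3) by (rule finite_subset[rotated])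
  then have "card A \<le> card B"
    using assms(2) by (rule card_mono)
  then have "{\<pi> \<in> permutations_of_set U. initial_set \<pi> A \<and> initial_set \<pi> B}
    = {\<pi> \<in> permutations_of_set U. initial_set \<pi> B \<and> initial_set (take (card B) \<pi>) A}"
    by (auto simp: initial_set_def min_def)
  then show ?thesis
    using card_permutations_initial_set_filter[OF assms(1,3), of "\<lambda>xs. initial_set xs A"]
      card_permutations_initial_set[OF fin assms(2)] by simp
qed

lemma binomial_mult_card_permutations_initial_set:
  assumes "finite U" "A \<subseteq> U"
  shows "(card U choose card A) * card {\<pi> \<in> permutations_of_set U. initial_set \<pi> A} = fact (card U)"
  using card_permutations_initial_set[OF assms] binomial_fact_lemma[OF card_mono[OF assms]]
  by (simp add: algebra_simps)

lemma comparable_count_mult_card_permutations_initial_sets: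
  assumes "finite U" "A \<subseteq> U" "B \<subseteq> U" "A \<subset> B \<or> B \<subset> A"
  shows "comparable_count (card U) (card A) (card B) * (card U choose card A)
    * card {\<pi> \<in> permutations_of_set U. initial_set \<pi> A \<and> initial_set \<pi> B} = fact (card U)"
proof -
  let ?n = "card U" and ?a = "card A" and ?b = "card B"
  have fin: "finite A" "finite B"
    using assms(1-3) finite_subset by auto
  have a: "fact ?a * fact (?n - ?a) * (?n choose ?a) = fact ?n"
    using assms(1,2) by (intro binomial_fact_lemma card_mono)
  from assms(4) show ?thesis
  proof
    assume "A \<subset> B"
    then have "?a < ?b" "?b \<le> ?n"
      using fin assms(1,3) by (auto intro: psubset_card_mono card_mono)
    moreover have "fact (?b - ?a) * fact (?n - ?a - (?b - ?a)) * ((?n - ?a) choose (?b - ?a))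
      = fact (?n - ?a)"
      using \<open>?a < ?b\<close> \<open>?b \<le> ?n\<close> by (intro binomial_fact_lemma) simp
    ultimately show ?thesis
      using card_permutations_initial_sets[OF assms(1) psubset_imp_subset[OF \<open>A \<subset> B\<close>] assms(3)] a
      by (simp add: comparable_count_def algebra_simps)
  next
    assume "B \<subset> A"
    then have "?b < ?a"
      using fin by (auto intro: psubset_card_mono)
    have "{\<pi> \<in> permutations_of_set U. initial_set \<pi> A \<and> initial_set \<pi> B}
      = {\<pi> \<in> permutations_of_set U. initial_set \<pi> B \<and> initial_set \<pi> A}"
      by auto
    then have "comparable_count ?n ?a ?b * (?n choose ?a)
        * card {\<pi> \<in> permutations_of_set U. initial_set \<pi> A \<and> initial_set \<pi> B}
      = (fact (?a - ?b) * fact (?a - (?a - ?b)) * (?a choose (?a - ?b))) * fact (?n - ?a) * (?n choose ?a)"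
      using card_permutations_initial_sets[OF assms(1) psubset_imp_subset[OF \<open>B \<subset> A\<close>] assms(2)]
        \<open>?b < ?a\<close> by (simp add: comparable_count_def algebra_simps)
    also have "\<dots> = fact ?n"
      using a by (subst binomial_fact_lemma) (simp_all add: algebra_simps)
    finally show ?thesis .
  qed
qed

lemma initial_set_psubset:
  assumes "initial_set \<pi> A" "initial_set \<pi> B" "card A < card B"
  shows "A \<subset> B"
  using assms set_take_subset_set_take[of "card A" "card B" \<pi>]
  by (auto simp: initial_set_def)

definition charged_pair :: "nat \<Rightarrow> nat \<Rightarrow> 'a set \<Rightarrow> 'a set \<Rightarrow> bool" where
  "charged_pair n D A B \<longleftrightarrow> (A \<subset> B \<or> B \<subset> A) \<and>
    level_rank n (card B) < level_rank n (card A) \<and> D \<le> comparable_count n (card A) (card B)"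

lemma image_card_uncharged_initial_sets:
  assumes "\<And>A. A \<in> C \<Longrightarrow> initial_set \<pi> A"
  shows "card ` {A \<in> C. \<forall>B\<in>C. \<not> charged_pair n D A B} = uncharged_levels n D (card ` C)"
proof -
  have charged: "charged_pair n D A B \<longleftrightarrow>
    level_rank n (card B) < level_rank n (card A) \<and> D \<le> comparable_count n (card A) (card B)"
    if "A \<in> C" "B \<in> C" for A B
  proof -
    have "A \<subset> B \<or> B \<subset> A" if "level_rank n (card B) < level_rank n (card A)"
      using that initial_set_psubset assms \<open>A \<in> C\<close> \<open>B \<in> C\<close> by (metis less_irrefl nat_neq_iff)
    then show ?thesis
      by (auto simp: charged_pair_def)
  qed
  show ?thesis
  proof (intro equalityI subsetI)
    fix r assume "r \<in> card ` {A \<in> C. \<forall>B\<in>C. \<not> charged_pair n D A B}"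
    then obtain A where A: "A \<in> C" "r = card A" "\<forall>B\<in>C. \<not> charged_pair n D A B"
      by blast
    have "comparable_count n (card A) (card B) < D"
      if "B \<in> C" "level_rank n (card B) < level_rank n (card A)" for B
      using A(3) charged[OF A(1) that(1)] that by (meson not_le)
    then show "r \<in> uncharged_levels n D (card ` C)"
      using A(1,2) by (auto simp: uncharged_levels_def)
  next
    fix r assume "r \<in> uncharged_levels n D (card ` C)"
    then obtain A where A: "A \<in> C" "r = card A"
      "\<forall>B\<in>C. level_rank n (card B) < level_rank n (card A) \<longrightarrow> comparable_count n (card A) (card B) < D"
      by (auto simp: uncharged_levels_def)
    then have "\<forall>B\<in>C. \<not> charged_pair n D A B"
      using charged by (meson not_le)
    then show "r \<in> card ` {A \<in> C. \<forall>B\<in>C. \<not> charged_pair n D A B}"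
      using A(1,2) by blast
  qed
qed

lemma sum_binomial_initial_sets_le:
  fixes S :: "'a set set" and n k :: nat
  defines "D \<equiv> (n + k + 1) div 2 choose k"
  assumes "1 \<le> k" "6 * k + 2 \<le> n" "finite S" "\<And>A. A \<in> S \<Longrightarrow> card A \<le> n"
  shows "(\<Sum>A\<in>{A \<in> S. initial_set \<pi> A}. n choose card A)
    \<le> (\<Sum>m\<in>middle_levels n k. n choose m)
      + (\<Sum>(A, B)\<in>{(A, B) \<in> S \<times> S. charged_pair n D A B \<and> initial_set \<pi> A \<and> initial_set \<pi> B}.
          n choose card A)"
proof -
  define C where "C = {A \<in> S. initial_set \<pi> A}"
  define Ch where "Ch = {A \<in> C. \<exists>B\<in>C. charged_pair n D A B}"
  have C: "finite C" "Ch \<subseteq> C"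
    using assms(4) by (auto simp: C_def Ch_def)
  have "inj_on card C"
    by (rule inj_onI) (metis (mono_tags) C_def initial_set_def mem_Collect_eq)
  have "C - Ch = {A \<in> C. \<forall>B\<in>C. \<not> charged_pair n D A B}"
    by (auto simp: Ch_def)
  then have levels: "card ` (C - Ch) = uncharged_levels n D (card ` C)"
    using image_card_uncharged_initial_sets[of C \<pi> n D] by (simp add: C_def)
  have "(\<Sum>A\<in>C - Ch. n choose card A) = (\<Sum>r\<in>uncharged_levels n D (card ` C). n choose r)"
    using \<open>inj_on card C\<close> by (simp add: levels[symmetric] sum.reindex inj_on_diff)
  also have "(\<Sum>r\<in>uncharged_levels n D (card ` C). n choose r) \<le> (\<Sum>m\<in>middle_levels n k. n choose m)"
    using assms(2,3,5) C(1) unfolding D_def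
    by (intro sum_binomial_uncharged_levels_le_middle_levels) (auto simp: C_def)
  finally have uncharged: "(\<Sum>A\<in>C - Ch. n choose card A) \<le> (\<Sum>m\<in>middle_levels n k. n choose m)" .
  have "(\<Sum>A\<in>Ch. n choose card A) \<le> (\<Sum>A\<in>C. \<Sum>B\<in>{B \<in> C. charged_pair n D A B}. n choose card A)"
  proof -
    have "n choose card A \<le> (\<Sum>B\<in>{B \<in> C. charged_pair n D A B}. n choose card A)" if "A \<in> Ch" for A
      using that C(1) by (auto simp: Ch_def Suc_le_eq card_gt_0_iff)
    then have "(\<Sum>A\<in>Ch. n choose card A) \<le> (\<Sum>A\<in>Ch. \<Sum>B\<in>{B \<in> C. charged_pair n D A B}. n choose card A)"
      by (rule sum_mono)
    also have "\<dots> \<le> (\<Sum>A\<in>C. \<Sum>B\<in>{B \<in> C. charged_pair n D A B}. n choose card A)"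
      using C(1,2) by (intro sum_mono2) auto
    finally show ?thesis .
  qed
  also have "\<dots> = (\<Sum>(A, B)\<in>(SIGMA A:C. {B \<in> C. charged_pair n D A B}). n choose card A)"
    using C(1) by (subst sum.Sigma) auto
  also have "(SIGMA A:C. {B \<in> C. charged_pair n D A B})
    = {(A, B) \<in> S \<times> S. charged_pair n D A B \<and> initial_set \<pi> A \<and> initial_set \<pi> B}"
    by (auto simp: C_def)
  finally show ?thesis
    using uncharged sum.subset_diff[OF C(2,1), of "\<lambda>A. n choose card A"] unfolding C_def by linarith
qed

lemma card_charged_pairs_le_comp:
  assumes "finite S"
  shows "card {(A, B) \<in> S \<times> S. charged_pair n D A B} \<le> comp S"
proof -
  let ?G = "{(A, B) \<in> S \<times> S. charged_pair n D A B}"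
  let ?orient = "\<lambda>(A, B). if A \<subset> B then (A, B) else (B, A)"
  have asym: "\<not> (charged_pair n D A B \<and> charged_pair n D B A)" for A B :: "'a set"
    by (auto simp: charged_pair_def)
  have "inj_on ?orient ?G"
  proof (rule inj_onI)
    fix p q assume "p \<in> ?G" "q \<in> ?G" "?orient p = ?orient q"
    then show "p = q"
      using asym by (cases p; cases q) (auto split: if_splits)
  qed
  moreover have "?orient ` ?G \<subseteq> {(A, B). A \<in> S \<and> B \<in> S \<and> A \<subset> B}"
  proof
    fix x assume "x \<in> ?orient ` ?G"
    then obtain A B where "A \<in> S" "B \<in> S" "charged_pair n D A B" "x = ?orient (A, B)"
      by auto
    then show "x \<in> {(A, B). A \<in> S \<and> B \<in> S \<and> A \<subset> B}"
      by (auto simp: charged_pair_def)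
  qed
  moreover have "finite {(A, B). A \<in> S \<and> B \<in> S \<and> A \<subset> B}"
    using assms by (auto intro: finite_subset[of _ "S \<times> S"])
  ultimately show ?thesis
    unfolding comp_def by (rule card_inj_on_le)
qed

lemma fact_mult_card_le_middle_plus_charged:
  fixes S :: "'a set set" and n k :: nat
  defines "D \<equiv> (n + k + 1) div 2 choose k"
  assumes "1 \<le> k" "6 * k + 2 \<le> n" "finite U" "card U = n" "S \<subseteq> Pow U"
  shows "fact n * card S \<le> fact n * (\<Sum>m\<in>middle_levels n k. n choose m)
    + (\<Sum>(A, B)\<in>{(A, B) \<in> S \<times> S. charged_pair n D A B}.
        (n choose card A) * card {\<pi> \<in> permutations_of_set U. initial_set \<pi> A \<and> initial_set \<pi> B})"
proof -
  let ?P = "permutations_of_set U"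
  let ?M = "\<Sum>m\<in>middle_levels n k. n choose m"
  let ?G = "{(A, B) \<in> S \<times> S. charged_pair n D A B}"
  let ?w = "\<lambda>(A, B). n choose card (A :: 'a set)"
  let ?both = "\<lambda>\<pi> (A, B). initial_set \<pi> A \<and> initial_set \<pi> B"
  have S: "finite S" "\<And>A. A \<in> S \<Longrightarrow> A \<subseteq> U"
    using assms(4,6) by (auto intro: finite_subset)
  have "fact n * card S = (\<Sum>A\<in>S. \<Sum>\<pi>\<in>{\<pi> \<in> ?P. initial_set \<pi> A}. n choose card A)"
    using binomial_mult_card_permutations_initial_set[OF assms(4) S(2)] assms(5)
    by (simp add: mult.commute)
  also have "\<dots> = (\<Sum>\<pi>\<in>?P. \<Sum>A\<in>{A \<in> S. initial_set \<pi> A}. n choose card A)"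
    using S(1) by (intro sum.swap_restrict) simp_all
  also have "\<dots> \<le> (\<Sum>\<pi>\<in>?P. ?M + (\<Sum>p\<in>{p \<in> ?G. ?both \<pi> p}. ?w p))"
  proof (intro sum_mono)
    fix \<pi> assume "\<pi> \<in> ?P"
    have "{p \<in> ?G. ?both \<pi> p}
      = {(A, B) \<in> S \<times> S. charged_pair n D A B \<and> initial_set \<pi> A \<and> initial_set \<pi> B}"
      by auto
    moreover have "card A \<le> n" if "A \<in> S" for A
      using card_mono[OF assms(4) S(2)[OF that]] assms(5) by simp
    ultimately show "(\<Sum>A\<in>{A \<in> S. initial_set \<pi> A}. n choose card A)
      \<le> ?M + (\<Sum>p\<in>{p \<in> ?G. ?both \<pi> p}. ?w p)"
      using sum_binomial_initial_sets_le[OF assms(2,3) S(1), of \<pi>] unfolding D_def by simp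
  qed
  also have "\<dots> = fact n * ?M + (\<Sum>\<pi>\<in>?P. \<Sum>p\<in>{p \<in> ?G. ?both \<pi> p}. ?w p)"
    using assms(4,5) by (simp add: sum.distrib)
  also have "(\<Sum>\<pi>\<in>?P. \<Sum>p\<in>{p \<in> ?G. ?both \<pi> p}. ?w p) = (\<Sum>p\<in>?G. \<Sum>\<pi>\<in>{\<pi> \<in> ?P. ?both \<pi> p}. ?w p)"
    using S(1) by (intro sum.swap_restrict) (auto intro: finite_subset[of _ "S \<times> S"])
  also have "\<dots> = (\<Sum>(A, B)\<in>?G.
      (n choose card A) * card {\<pi> \<in> ?P. initial_set \<pi> A \<and> initial_set \<pi> B})"
    by (intro sum.cong) (auto simp: mult.commute)
  finally show ?thesis .
qed

lemma mult_card_le_middle_levels_plus_comp: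
  fixes S :: "nat set set" and n k :: nat
  defines "D \<equiv> (n + k + 1) div 2 choose k"
  assumes "1 \<le> k" "6 * k + 2 \<le> n" "finite U" "card U = n" "S \<subseteq> Pow U"
  shows "D * card S \<le> D * (\<Sum>m\<in>middle_levels n k. n choose m) + comp S"
proof -
  let ?M = "\<Sum>m\<in>middle_levels n k. n choose m"
  let ?G = "{(A, B) \<in> S \<times> S. charged_pair n D A B}"
  let ?X = "\<Sum>(A, B)\<in>?G.
    (n choose card A) * card {\<pi> \<in> permutations_of_set U. initial_set \<pi> A \<and> initial_set \<pi> B}"
  have S: "finite S"
    using assms(4,6) by (auto intro: finite_subset)
  have "D * ?X \<le> (\<Sum>p\<in>?G. fact n)"
    unfolding sum_distrib_left
  proof (intro sum_mono, clarify)
    fix A B assume "A \<in> S" "B \<in> S" "charged_pair n D A B"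
    then have AB: "A \<subseteq> U" "B \<subseteq> U" "A \<subset> B \<or> B \<subset> A"
      "D \<le> comparable_count n (card A) (card B)"
      using assms(6) by (auto simp: charged_pair_def)
    let ?c = "card {\<pi> \<in> permutations_of_set U. initial_set \<pi> A \<and> initial_set \<pi> B}"
    have "D * ((n choose card A) * ?c) \<le> comparable_count n (card A) (card B) * (n choose card A) * ?c"
      using AB(4) by (simp add: mult.assoc mult_right_mono)
    also have "\<dots> = fact n"
      using comparable_count_mult_card_permutations_initial_sets[OF assms(4) AB(1-3)] assms(5) by simp
    finally show "D * ((n choose card A) * ?c) \<le> fact n" .
  qed
  then have X: "D * ?X \<le> fact n * card ?G"
    by (simp add: mult.commute)
  have "fact n * (D * card S) = D * (fact n * card S)"
    by (simp add: mult.left_commute)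
  also have "\<dots> \<le> D * (fact n * ?M + ?X)"
    using fact_mult_card_le_middle_plus_charged[OF assms(2-6)] unfolding D_def by (rule mult_le_mono2)
  also have "\<dots> \<le> fact n * (D * ?M + card ?G)"
    using X by (simp add: algebra_simps)
  finally have "D * card S \<le> D * ?M + card ?G"
    by simp
  also have "card ?G \<le> comp S"
    using S by (rule card_charged_pairs_le_comp)
  finally show ?thesis
    by simp
qed

lemma nat_ceiling_half: "nat \<lceil>real m / 2\<rceil> = (m + 1) div 2"
proof -
  have "\<lceil>real_of_int (int m) / real_of_int 2\<rceil> = - (- int m div 2)"
    by (rule ceiling_divide_eq_div)
  also have "\<dots> = int ((m + 1) div 2)"
    by presburger
  finally show ?thesis
    by simp
qed

lemma sum_ceiling_levels_eq_middle_levels: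
  assumes "k \<le> n"
  shows "(\<Sum>r<k. int (n choose nat \<lceil>(real n - real k + 1 + 2 * real r) / 2\<rceil>))
    = int (\<Sum>m\<in>middle_levels n k. n choose m)"
proof -
  have "nat \<lceil>(real n - real k + 1 + 2 * real r) / 2\<rceil> = r + (n + 2 - k) div 2" for r
    using nat_ceiling_half[of "n + 1 + 2 * r - k"] assms by (simp add: of_nat_diff algebra_simps)
  moreover have "middle_levels n k = {0 + (n + 2 - k) div 2..<k + (n + 2 - k) div 2}"
    by (simp add: middle_levels_def add.commute)
  then have "(\<Sum>m\<in>middle_levels n k. n choose m) = (\<Sum>r<k. n choose (r + (n + 2 - k) div 2))"
    by (simp only: sum.shift_bounds_nat_ivl atLeast0LessThan)
  ultimately show ?thesis
    by simp
qed

theorem mainTheorem8: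
  fixes k :: nat
  assumes "k \<ge> 1"
  shows "\<exists>n0::nat. \<forall>n \<ge> n0. \<forall>(t::int) (S::nat set set).
    S \<subseteq> Pow {1..n} \<and>
    int (card S) \<ge> (\<Sum>r<k. int (n choose nat \<lceil>(real n - real k + 1 + 2 * real r) / 2\<rceil>)) + t
    \<longrightarrow> int (comp S) \<ge> t * int (nat \<lceil>(real n + real k) / 2\<rceil> choose k)"
proof (intro exI[of _ "6 * k + 2"] allI impI, elim conjE)
  fix n :: nat and t :: int and S :: "nat set set"
  assume n: "n \<ge> 6 * k + 2" and S: "S \<subseteq> Pow {1..n}"
    and card: "int (card S) \<ge> (\<Sum>r<k. int (n choose nat \<lceil>(real n - real k + 1 + 2 * real r) / 2\<rceil>)) + t"
  define D where "D = (n + k + 1) div 2 choose k"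
  define M where "M = (\<Sum>m\<in>middle_levels n k. n choose m)"
  have "D * card S \<le> D * M + comp S"
    using mult_card_le_middle_levels_plus_comp[OF assms n _ _ S] unfolding D_def M_def by simp
  then have "int D * (int (card S) - int M) \<le> int (comp S)"
    by (simp add: algebra_simps flip: of_nat_mult of_nat_add)
  moreover have "t \<le> int (card S) - int M"
    using card sum_ceiling_levels_eq_middle_levels[of k n] n unfolding M_def by simp
  ultimately have "t * int D \<le> int (comp S)"
    by (smt (verit) mult.commute mult_left_mono of_nat_0_le_iff)
  then show "int (comp S) \<ge> t * int (nat \<lceil>(real n + real k) / 2\<rceil> choose k)"
    using nat_ceiling_half[of "n + k"] by (simp add: D_def)
qed

end
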